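(* Let $H = \{h_0 = 0_H, h_1, \dots, h_{t-1}\}$ be a finite abelian group with a fixed enumeration of its elements, and let $\boldsymbol{\lambda} = (\lambda_0,\dots,\lambda_{t-1})$ be a sequence of nonnegative integers with $k = \lambda_0 + \cdots + \lambda_{t-1}$. Suppose that for infinitely many primes $p$, every non-zero sum subset of type $\boldsymbol{\lambda}$ of $(\mathbb{Z}_p \times H) \setminus \{0_{\mathbb{Z}_p\times H}\}$ is sequenceable. Then for every positive integer $m$ all of whose prime factors are greater than $k!/2$, every non-zero sum subset of type $\boldsymbol{\lambda}$ of $(\mathbb{Z}_m \times H) \setminus \{0_{\mathbb{Z}_m\times H}\}$ is sequenceable.
   Context: For a finite subset $S$ of an abelian group with $|S| = k$, an ordering $(x_1,\dots,x_k)$ of $S$ has partial sums $(y_0,\dots,y_k)$ with $y_0 = 0$, $y_i = x_1+\cdots+x_i$. It is a sequencing if the $y_i$ are pairwise distinct, and a rotational sequencing if they are pairwise distinct except that $y_k = y_0 = 0$; $S$ is sequenceable if it has one or the other. $S$ is non-zero sum if the sum of its elements is nonzero. The type of a finite subset $S \subseteq G \times H$ is $(\lambda_0,\dots,\lambda_{t-1})$ where $\lambda_i$ is the number of elements of $S$ whose $H$-coordinate equals $h_i$. *)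

theory Defs
  imports "HOL-Computational_Algebra.Primes"
begin

text \<open>The group Z_m x H is modelled with carrier {0..<m} x UNIV, where the first
  coordinate is added modulo m and the second in the abelian group H.\<close>

definition zsum :: "nat \<Rightarrow> (nat \<times> 'h::ab_group_add) list \<Rightarrow> nat \<times> 'h" where
  "zsum m xs = ((\<Sum>x\<leftarrow>xs. fst x) mod m, (\<Sum>x\<leftarrow>xs. snd x))"

definition psums :: "nat \<Rightarrow> (nat \<times> 'h::ab_group_add) list \<Rightarrow> nat \<Rightarrow> nat \<times> 'h" where
  "psums m xs i = zsum m (take i xs)"

definition is_sequencing :: "nat \<Rightarrow> (nat \<times> 'h::ab_group_add) list \<Rightarrow> bool" where
  "is_sequencing m xs \<longleftrightarrow> distinct (map (psums m xs) [0..<length xs + 1])"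

definition is_rotational_sequencing :: "nat \<Rightarrow> (nat \<times> 'h::ab_group_add) list \<Rightarrow> bool" where
  "is_rotational_sequencing m xs \<longleftrightarrow>
     distinct (map (psums m xs) [0..<length xs]) \<and> psums m xs (length xs) = (0, 0)"

definition sequenceable :: "nat \<Rightarrow> (nat \<times> 'h::ab_group_add) set \<Rightarrow> bool" where
  "sequenceable m S \<longleftrightarrow> (\<exists>xs. distinct xs \<and> set xs = S \<and>
      (is_sequencing m xs \<or> is_rotational_sequencing m xs))"

definition nonzero_sum :: "nat \<Rightarrow> (nat \<times> 'h::ab_group_add) set \<Rightarrow> bool" where
  "nonzero_sum m S \<longleftrightarrow> ((\<Sum>x\<in>S. fst x) mod m, (\<Sum>x\<in>S. snd x)) \<noteq> (0, 0)"

definition has_type :: "(nat \<Rightarrow> 'h) \<Rightarrow> nat \<Rightarrow> (nat \<Rightarrow> nat) \<Rightarrow> (nat \<times> 'h) set \<Rightarrow> bool" where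
  "has_type e t lam S \<longleftrightarrow> (\<forall>i<t. card {x\<in>S. snd x = e i} = lam i)"

definition nonzero_elems :: "nat \<Rightarrow> (nat \<times> 'h::zero) set" where
  "nonzero_elems m = ({0..<m} \<times> UNIV) - {(0, 0)}"

end

(*
  The subsets of S
  with zero sum give a system of linear equations sum_{s in T} x_s = 0 over the integers which
  the first coordinates of S satisfy modulo m.  Choosing a maximal nonsingular minor of this 0-1
  system and solving by cofactors yields an integer solution x with x = D * fst (mod m), where D
  is the minor.  Since |D| <= k!/2 and every prime factor of m exceeds k!/2, D is a unit mod m,
  so s |-> (x s, snd s) embeds S into Z x H with exactly the same zero-sum subsets.  Reducing
  modulo one of the infinitely many good primes p > 2 sum |x s| gives a subset of Z_p x H of the
  same type and again the same zero-sum subsets; a sequencing of it pulls back to a sequencing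
  of S, and a rotational one cannot occur since S has non-zero sum.
*)
theory Submission
  imports Defs "Jordan_Normal_Form.Determinant"
begin

section \<open>Determinants of 0-1 matrices\<close>

lemma prod_perm_entries_bounds:
  fixes A :: "'a::linordered_idom mat"
  assumes entries: "\<And>i j. i < n \<Longrightarrow> j < n \<Longrightarrow> 0 \<le> A $$ (i, j) \<and> A $$ (i, j) \<le> 1"
    and "p permutes {0..<n}"
  shows "0 \<le> (\<Prod>i = 0..<n. A $$ (i, p i)) \<and> (\<Prod>i = 0..<n. A $$ (i, p i)) \<le> 1"
proof -
  have "p i < n" if "i < n" for i
    using that permutes_in_image[OF assms(2)] by simp
  then show ?thesis
    using entries by (intro conjI prod_nonneg prod_le_1) auto
qed

lemma abs_det_le_fact:
  fixes A :: "'a::linordered_idom mat"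
  assumes A: "A \<in> carrier_mat n n"
    and entries: "\<And>i j. i < n \<Longrightarrow> j < n \<Longrightarrow> 0 \<le> A $$ (i, j) \<and> A $$ (i, j) \<le> 1"
  shows "\<bar>det A\<bar> \<le> fact n"
proof -
  let ?f = "\<lambda>p. \<Prod>i = 0..<n. A $$ (i, p i)"
  have "\<bar>det A\<bar> \<le> (\<Sum>p | p permutes {0..<n}. \<bar>signof p * ?f p\<bar>)"
    unfolding det_def'[OF A] by (rule sum_abs)
  also have "\<dots> \<le> (\<Sum>p | p permutes {0..<n}. 1)"
    using prod_perm_entries_bounds[where A = A and n = n, OF entries]
    by (intro sum_mono) (auto simp: sign_def abs_mult)
  also have "\<dots> = fact n"
    by (simp add: card_permutations)
  finally show ?thesis .
qed

lemma card_evenperm_eq_card_oddperm: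
  assumes "finite A" and "a \<in> A" "b \<in> A" "a \<noteq> b"
  shows "card {p. p permutes A \<and> evenperm p} = card {p. p permutes A \<and> \<not> evenperm p}"
proof -
  let ?\<tau> = "Transposition.transpose a b"
  have \<tau>: "?\<tau> permutes A"
    using assms by (intro permutes_swap_id) auto
  have "evenperm (?\<tau> \<circ> p) \<longleftrightarrow> \<not> evenperm p" if "p permutes A" for p
  proof -
    have "permutation p" "permutation ?\<tau>"
      using that \<tau> \<open>finite A\<close> permutation_permutes by blast+
    then show ?thesis
      using \<open>a \<noteq> b\<close> by (simp add: evenperm_comp evenperm_swap)
  qed
  then have "bij_betw ((\<circ>) ?\<tau>) {p. p permutes A \<and> evenperm p} {p. p permutes A \<and> \<not> evenperm p}"
    by (intro bij_betwI[where g = "(\<circ>) ?\<tau>"])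
      (use \<tau> permutes_compose in \<open>auto simp: fun_eq_iff Transposition.transpose_def\<close>)
  then show ?thesis
    by (rule bij_betw_same_card)
qed

text \<open>The two halves of the Leibniz expansion are sums of n!/2 terms in [0,1] each.\<close>
lemma two_abs_det_le_fact:
  fixes A :: "'a::linordered_idom mat"
  assumes A: "A \<in> carrier_mat n n"
    and entries: "\<And>i j. i < n \<Longrightarrow> j < n \<Longrightarrow> 0 \<le> A $$ (i, j) \<and> A $$ (i, j) \<le> 1"
    and "2 \<le> n"
  shows "2 * \<bar>det A\<bar> \<le> fact n"
proof -
  let ?P = "{p. p permutes {0..<n}}"
  let ?E = "{p \<in> ?P. evenperm p}" and ?O = "{p \<in> ?P. \<not> evenperm p}"
  let ?f = "\<lambda>p. \<Prod>i = 0..<n. A $$ (i, p i)"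
  have fin: "finite ?P"
    by (simp add: finite_permutations)
  have "det A = (\<Sum>p\<in>?E. signof p * ?f p) + (\<Sum>p\<in>?O. signof p * ?f p)"
    unfolding det_def'[OF A] using fin
    by (subst sum.union_disjoint[symmetric]) (auto intro: sum.cong)
  then have det: "det A = sum ?f ?E - sum ?f ?O"
    by (simp add: sign_def sum_negf)
  have card_E_O: "card ?E = card ?O"
    using card_evenperm_eq_card_oddperm[of "{0..<n}" 0 1] \<open>2 \<le> n\<close> by simp
  have "?E \<union> ?O = ?P"
    by blast
  then have "card ?E + card ?O = fact n"
    using fin by (subst card_Un_disjoint[symmetric]) (auto simp: card_permutations)
  then have "of_nat (card ?E + card ?O) = (fact n :: 'a)"
    by (simp only: of_nat_fact)
  then have two_card: "2 * of_nat (card ?E) = (fact n :: 'a)"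
    unfolding of_nat_add mult_2 card_E_O .
  have f_bounds: "0 \<le> ?f p \<and> ?f p \<le> 1" if "p \<in> ?P" for p
    using that prod_perm_entries_bounds[where A = A and n = n, OF entries] by blast
  have "0 \<le> sum ?f ?E" "0 \<le> sum ?f ?O"
    using f_bounds by (auto intro: sum_nonneg)
  moreover have "sum ?f ?E \<le> of_nat (card ?E)" "sum ?f ?O \<le> of_nat (card ?O)"
    using f_bounds by (auto intro: sum_bounded_above[where K = 1, simplified])
  ultimately have "\<bar>det A\<bar> \<le> of_nat (card ?E)"
    unfolding det card_E_O by linarith
  then show ?thesis
    using two_card by linarith
qed

lemma coprime_det_if_prime_factors_large:
  fixes A :: "int mat" and m :: nat
  assumes A: "A \<in> carrier_mat n n"
    and entries: "\<And>i j. i < n \<Longrightarrow> j < n \<Longrightarrow> 0 \<le> A $$ (i, j) \<and> A $$ (i, j) \<le> 1"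
    and "det A \<noteq> 0"
    and large: "\<And>q. prime q \<Longrightarrow> q dvd m \<Longrightarrow> fact n < 2 * q"
  shows "coprime (det A) (int m)"
proof (rule ccontr)
  assume "\<not> coprime (det A) (int m)"
  then have "\<bar>gcd (det A) (int m)\<bar> \<noteq> 1"
    by (simp add: coprime_iff_gcd_eq_1)
  then obtain q where q: "prime q" "q dvd gcd (det A) (int m)"
    by (rule prime_factor_int)
  have "0 \<le> q"
    using q(1) by (simp add: prime_ge_0_int)
  then have "prime (nat q)" "nat q dvd m"
    using q by (auto simp flip: int_dvd_int_iff)
  then have "fact n < 2 * nat q"
    using large by blast
  then have "int (fact n) < int (2 * nat q)"
    by (simp only: of_nat_less_iff)
  then have fact_less: "fact n < 2 * q"
    using \<open>0 \<le> q\<close> by simp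
  have q_le: "q \<le> \<bar>det A\<bar>"
    using q(2) \<open>det A \<noteq> 0\<close> by (auto intro: zdvd_imp_le dvd_trans)
  show False
  proof (cases "2 \<le> n")
    case True
    then show False
      using two_abs_det_le_fact[OF A entries] fact_less q_le by linarith
  next
    case False
    then have "n = 0 \<or> n = 1"
      by linarith
    then have "fact n = (1::int)"
      by auto
    then show False
      using abs_det_le_fact[OF A entries] fact_less q_le prime_ge_2_int[OF q(1)] by linarith
  qed
qed

section \<open>Integral kernel vectors\<close>

text \<open>Rows of a matrix are modelled as functions on the column index type.\<close>
definition minor_mat :: "('c \<Rightarrow> 'a) list \<Rightarrow> 'c list \<Rightarrow> 'a mat" where
  "minor_mat ws cs = mat (length ws) (length cs) (\<lambda>(i, j). (ws ! i) (cs ! j))"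

lemma minor_mat_carrier: "minor_mat ws cs \<in> carrier_mat (length ws) (length cs)"
  by (simp add: minor_mat_def)

lemma index_minor_mat [simp]:
  "i < length ws \<Longrightarrow> j < length cs \<Longrightarrow> minor_mat ws cs $$ (i, j) = (ws ! i) (cs ! j)"
  by (simp add: minor_mat_def)

lemma det_minor_mat_Nil [simp]: "det (minor_mat [] []) = 1"
  by (simp add: det_def minor_mat_def)

lemma exists_maximal_nonsingular_minor:
  fixes W :: "('c \<Rightarrow> 'a::comm_ring_1) set"
  assumes "finite S"
  obtains ws cs where "set ws \<subseteq> W" "distinct cs" "set cs \<subseteq> S" "length ws = length cs"
    "det (minor_mat ws cs) \<noteq> 0"
    "\<And>w f. w \<in> W \<Longrightarrow> f \<in> S - set cs \<Longrightarrow> det (minor_mat (ws @ [w]) (cs @ [f])) = 0"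
proof -
  define nonsingular where "nonsingular r \<longleftrightarrow> (\<exists>ws cs. set ws \<subseteq> W \<and> distinct cs \<and> set cs \<subseteq> S
      \<and> length ws = r \<and> length cs = r \<and> det (minor_mat ws cs) \<noteq> 0)" for r
  have bounded: "\<And>r. nonsingular r \<Longrightarrow> r \<le> card S"
    unfolding nonsingular_def using assms by (metis card_mono distinct_card)
  have "nonsingular 0"
    unfolding nonsingular_def by auto
  define r where "r = (GREATEST r. nonsingular r)"
  have "nonsingular r"
    unfolding r_def using \<open>nonsingular 0\<close> bounded by (rule GreatestI_nat)
  then obtain ws cs where ws_cs: "set ws \<subseteq> W" "distinct cs" "set cs \<subseteq> S"
    "length ws = r" "length cs = r" "det (minor_mat ws cs) \<noteq> 0"
    unfolding nonsingular_def by blast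
  moreover have "det (minor_mat (ws @ [w]) (cs @ [f])) = 0" if "w \<in> W" "f \<in> S - set cs" for w f
  proof (rule ccontr)
    assume "det (minor_mat (ws @ [w]) (cs @ [f])) \<noteq> 0"
    then have "nonsingular (Suc r)"
      unfolding nonsingular_def using ws_cs that by (intro exI[of _ "ws @ [w]"] exI[of _ "cs @ [f]"]) auto
    then show False
      using Greatest_le_nat[of nonsingular "Suc r", OF _ bounded] unfolding r_def by simp
  qed
  ultimately show thesis
    using that by simp
qed

text \<open>The last row of the bordered matrix is only a placeholder: the cofactors along it do not
  depend on it.\<close>
definition cofactor_vec :: "('c \<Rightarrow> 'a::comm_ring_1) list \<Rightarrow> 'c list \<Rightarrow> 'c \<Rightarrow> 'a" where
  "cofactor_vec ws cs s = (\<Sum>j<length cs.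
     if cs ! j = s then cofactor (minor_mat (ws @ [\<lambda>_. 0]) cs) (length ws) j else 0)"

lemma cofactor_minor_mat_last_row:
  "cofactor (minor_mat (ws @ [w]) cs) (length ws) j = cofactor (minor_mat (ws @ [v]) cs) (length ws) j"
proof -
  have "mat_delete (minor_mat (ws @ [w]) cs) (length ws) j = mat_delete (minor_mat (ws @ [v]) cs) (length ws) j"
    by (intro eq_matI) (auto simp: mat_delete_def minor_mat_def nth_append)
  then show ?thesis
    by (simp add: cofactor_def)
qed

lemma sum_mult_cofactor_vec:
  assumes "finite S" "distinct cs" "set cs \<subseteq> S" "length cs = Suc (length ws)"
  shows "(\<Sum>s\<in>S. w s * cofactor_vec ws cs s) = det (minor_mat (ws @ [w]) cs)"
proof -
  let ?r = "length ws" and ?B = "minor_mat (ws @ [w]) cs"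
  have B: "?B \<in> carrier_mat (Suc ?r) (Suc ?r)"
    using minor_mat_carrier[of "ws @ [w]" cs] assms(4) by simp
  have "(\<Sum>s\<in>S. w s * cofactor_vec ws cs s)
      = (\<Sum>s\<in>S. \<Sum>j<Suc ?r. if cs ! j = s then w s * cofactor ?B ?r j else 0)"
    unfolding cofactor_vec_def cofactor_minor_mat_last_row[of ws "\<lambda>_. 0" cs _ w] assms(4) sum_distrib_left
    by (intro sum.cong refl) simp
  also have "\<dots> = (\<Sum>j<Suc ?r. \<Sum>s\<in>S. if cs ! j = s then w s * cofactor ?B ?r j else 0)"
    by (rule sum.swap)
  also have "\<dots> = (\<Sum>j<Suc ?r. ?B $$ (?r, j) * cofactor ?B ?r j)"
  proof (intro sum.cong refl)
    fix j
    assume "j \<in> {..<Suc ?r}"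
    then have "cs ! j \<in> S"
      using assms(3,4) nth_mem[of j cs] by auto
    then show "(\<Sum>s\<in>S. if cs ! j = s then w s * cofactor ?B ?r j else 0) = ?B $$ (?r, j) * cofactor ?B ?r j"
      using \<open>j \<in> {..<Suc ?r}\<close> assms by (simp add: sum.delta nth_append)
  qed
  also have "\<dots> = det ?B"
    using laplace_expansion_row[OF B, of ?r] by simp
  finally show ?thesis .
qed

lemma cofactor_vec_eq_0: "s \<notin> set cs \<Longrightarrow> cofactor_vec ws cs s = 0"
  unfolding cofactor_vec_def by (intro sum.neutral) auto

lemma cofactor_vec_last:
  assumes "f \<notin> set cs" "length cs = length ws"
  shows "cofactor_vec ws (cs @ [f]) f = det (minor_mat ws cs)"
proof -
  let ?r = "length ws"
  have "cofactor_vec ws (cs @ [f]) f = cofactor (minor_mat (ws @ [\<lambda>_. 0]) (cs @ [f])) ?r ?r"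
    unfolding cofactor_vec_def using assms nth_mem[of _ cs]
    by (auto simp: nth_append intro!: sum.neutral)
  also have "\<dots> = det (minor_mat ws cs)"
  proof -
    have "mat_delete (minor_mat (ws @ [\<lambda>_. 0]) (cs @ [f])) ?r ?r = minor_mat ws cs"
      using assms by (intro eq_matI) (auto simp: mat_delete_def minor_mat_def nth_append)
    then show ?thesis
      by (simp add: cofactor_def flip: mult_2)
  qed
  finally show ?thesis .
qed

lemma coprime_det_dvd_cancel:
  fixes A :: "'a::ring_gcd mat"
  assumes A: "A \<in> carrier_mat n n" and "coprime (det A) m"
    and dvd: "\<And>i. i < n \<Longrightarrow> m dvd (\<Sum>k<n. A $$ (i, k) * v k)" and "j < n"
  shows "m dvd v j"
proof -
  have adj: "(\<Sum>i<n. adj_mat A $$ (j, i) * A $$ (i, k)) = (if k = j then det A else 0)" if "k < n" for k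
  proof -
    have "(adj_mat A * A) $$ (j, k) = (\<Sum>i<n. adj_mat A $$ (j, i) * A $$ (i, k))"
      using adj_mat(1)[OF A] A \<open>j < n\<close> that by (simp add: scalar_prod_def atLeast0LessThan)
    then show ?thesis
      using adj_mat(3)[OF A] \<open>j < n\<close> that by auto
  qed
  have "(\<Sum>i<n. adj_mat A $$ (j, i) * (\<Sum>k<n. A $$ (i, k) * v k))
      = (\<Sum>k<n. (\<Sum>i<n. adj_mat A $$ (j, i) * A $$ (i, k)) * v k)"
    by (simp add: sum_distrib_left sum_distrib_right mult.assoc) (rule sum.swap)
  also have "\<dots> = (\<Sum>k<n. if k = j then det A * v k else 0)"
    using adj by (intro sum.cong refl) simp
  also have "\<dots> = det A * v j"
    using \<open>j < n\<close> by simp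
  moreover have "m dvd (\<Sum>i<n. adj_mat A $$ (j, i) * (\<Sum>k<n. A $$ (i, k) * v k))"
    using dvd by (intro dvd_sum) (simp add: dvd_mult)
  ultimately have "m dvd det A * v j"
    by simp
  then show ?thesis
    using \<open>coprime (det A) m\<close> by (simp add: coprime_commute coprime_dvd_mult_right_iff)
qed

lemma sum_nth_distinct: "distinct cs \<Longrightarrow> (\<Sum>k<length cs. g (cs ! k)) = (\<Sum>s\<in>set cs. g s)"
  by (simp add: sum.distinct_set_conv_list sum_list_sum_nth atLeast0LessThan)

lemma exists_kernel_vector_scaled_on_free_columns:
  fixes W :: "('c \<Rightarrow> 'a::comm_ring_1) set" and a :: "'c \<Rightarrow> 'a"
  assumes "finite S" and cs: "distinct cs" "set cs \<subseteq> S" and len: "length ws = length cs"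
    and maximal: "\<And>w f. w \<in> W \<Longrightarrow> f \<in> S - set cs \<Longrightarrow> det (minor_mat (ws @ [w]) (cs @ [f])) = 0"
  obtains x where "\<And>w. w \<in> W \<Longrightarrow> (\<Sum>s\<in>S. w s * x s) = 0"
    and "\<And>s. s \<in> S - set cs \<Longrightarrow> x s = det (minor_mat ws cs) * a s"
proof -
  define F where "F = S - set cs"
  \<comment> \<open>Each cofactor vector of a bordered minor is a kernel vector by maximality of the minor.\<close>
  define x where "x s = (\<Sum>f\<in>F. a f * cofactor_vec ws (cs @ [f]) s)" for s
  have kernel: "(\<Sum>s\<in>S. w s * x s) = 0" if "w \<in> W" for w
  proof -
    have "(\<Sum>s\<in>S. w s * x s) = (\<Sum>f\<in>F. a f * (\<Sum>s\<in>S. w s * cofactor_vec ws (cs @ [f]) s))"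
      unfolding x_def by (simp add: sum_distrib_left mult.left_commute) (rule sum.swap)
    also have "\<dots> = (\<Sum>f\<in>F. a f * det (minor_mat (ws @ [w]) (cs @ [f])))"
      using \<open>finite S\<close> cs len by (intro sum.cong refl) (simp add: sum_mult_cofactor_vec F_def)
    also have "\<dots> = 0"
      using maximal that by (simp add: F_def)
    finally show ?thesis .
  qed
  have free: "x s = det (minor_mat ws cs) * a s" if "s \<in> F" for s
  proof -
    have "x s = a s * cofactor_vec ws (cs @ [s]) s + (\<Sum>f\<in>F - {s}. a f * cofactor_vec ws (cs @ [f]) s)"
      unfolding x_def using \<open>finite S\<close> that by (simp add: sum.remove F_def)
    also have "cofactor_vec ws (cs @ [f]) s = 0" if "f \<in> F - {s}" for f
      using \<open>s \<in> F\<close> that by (intro cofactor_vec_eq_0) (auto simp: F_def)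
    then have "(\<Sum>f\<in>F - {s}. a f * cofactor_vec ws (cs @ [f]) s) = 0"
      by (intro sum.neutral) simp
    finally show ?thesis
      using that len by (simp add: F_def cofactor_vec_last)
  qed
  show thesis
  proof (rule that)
    show "(\<Sum>s\<in>S. w s * x s) = 0" if "w \<in> W" for w
      using that by (rule kernel)
    show "x s = det (minor_mat ws cs) * a s" if "s \<in> S - set cs" for s
      using that by (simp add: free F_def)
  qed
qed

lemma exists_kernel_vector_congruent_multiple:
  fixes W :: "('c \<Rightarrow> int) set" and a :: "'c \<Rightarrow> int" and m :: int
  assumes "finite S"
    and a: "\<And>w. w \<in> W \<Longrightarrow> m dvd (\<Sum>s\<in>S. w s * a s)"
    and minors: "\<And>ws cs. set ws \<subseteq> W \<Longrightarrow> distinct cs \<Longrightarrow> set cs \<subseteq> S \<Longrightarrow> length ws = length cs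
      \<Longrightarrow> det (minor_mat ws cs) \<noteq> 0 \<Longrightarrow> coprime (det (minor_mat ws cs)) m"
  obtains x D where "coprime D m" "\<And>w. w \<in> W \<Longrightarrow> (\<Sum>s\<in>S. w s * x s) = 0"
    "\<And>s. s \<in> S \<Longrightarrow> m dvd x s - D * a s"
proof -
  obtain ws cs where ws: "set ws \<subseteq> W" and cs: "distinct cs" "set cs \<subseteq> S"
    and len: "length ws = length cs" and nonsingular: "det (minor_mat ws cs) \<noteq> 0"
    and maximal: "\<And>w f. w \<in> W \<Longrightarrow> f \<in> S - set cs \<Longrightarrow> det (minor_mat (ws @ [w]) (cs @ [f])) = 0"
    using exists_maximal_nonsingular_minor[OF \<open>finite S\<close>, of W] by blast
  define r and N and D where "r = length cs" and "N = minor_mat ws cs" and "D = det N"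
  obtain x where kernel: "\<And>w. w \<in> W \<Longrightarrow> (\<Sum>s\<in>S. w s * x s) = 0"
    and free: "\<And>s. s \<in> S - set cs \<Longrightarrow> x s = D * a s"
    using exists_kernel_vector_scaled_on_free_columns[OF \<open>finite S\<close> cs len maximal, of W a]
    unfolding D_def N_def by blast
  have "coprime D m"
    unfolding D_def N_def using minors ws cs len nonsingular .
  \<comment> \<open>On the columns cs, the minor N maps y to 0 mod m and det N is a unit mod m.\<close>
  define y where "y s = x s - D * a s" for s
  have rows: "m dvd (\<Sum>k<r. N $$ (i, k) * y (cs ! k))" if "i < r" for i
  proof -
    have w: "ws ! i \<in> W"
      using ws len that by (auto simp: r_def)
    have "(\<Sum>k<r. N $$ (i, k) * y (cs ! k)) = (\<Sum>s\<in>set cs. (ws ! i) s * y s)"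
      using that len sum_nth_distinct[OF cs(1), of "\<lambda>s. (ws ! i) s * y s"]
      by (auto simp: N_def r_def intro: sum.cong)
    also have "\<dots> = (\<Sum>s\<in>S. (ws ! i) s * y s)"
      using \<open>finite S\<close> cs(2) free by (intro sum.mono_neutral_left) (auto simp: y_def)
    also have "\<dots> = (\<Sum>s\<in>S. (ws ! i) s * x s) - D * (\<Sum>s\<in>S. (ws ! i) s * a s)"
      by (simp add: y_def right_diff_distrib sum_subtractf sum_distrib_left mult.left_commute)
    finally show ?thesis
      using kernel[OF w] a[OF w] by simp
  qed
  have "m dvd y s" if "s \<in> S" for s
  proof (cases "s \<in> set cs")
    case True
    then obtain k where "k < r" "s = cs ! k"
      by (auto simp: r_def in_set_conv_nth)
    moreover have "N \<in> carrier_mat r r"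
      using minor_mat_carrier[of ws cs] len by (simp add: N_def r_def)
    ultimately show ?thesis
      using coprime_det_dvd_cancel[where v = "\<lambda>k. y (cs ! k)", OF _ _ rows] \<open>coprime D m\<close>
      by (simp add: D_def)
  next
    case False
    then show ?thesis
      using that free by (simp add: y_def)
  qed
  then show thesis
    using that[OF \<open>coprime D m\<close> kernel] unfolding y_def by blast
qed

section \<open>Sequencings and zero-sum blocks\<close>

lemma zsum_distinct:
  "distinct xs \<Longrightarrow> zsum m xs = ((\<Sum>x\<in>set xs. fst x) mod m, \<Sum>x\<in>set xs. snd x)"
  by (simp add: zsum_def sum_list_distinct_conv_sum_set)

lemma nonzero_sum_set_iff: "distinct xs \<Longrightarrow> nonzero_sum m (set xs) \<longleftrightarrow> zsum m xs \<noteq> (0, 0)"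
  by (simp add: nonzero_sum_def zsum_distinct)

lemma nonzero_sum_singleton: "fst s < m \<Longrightarrow> nonzero_sum m {s} \<longleftrightarrow> s \<noteq> (0, 0)"
  by (cases s) (simp add: nonzero_sum_def)

lemma psums_eq_iff:
  assumes "i \<le> j"
  shows "psums m xs i = psums m xs j \<longleftrightarrow> zsum m (drop i (take j xs)) = (0, 0)"
proof -
  have "take j xs = take i xs @ drop i (take j xs)"
    using assms by (metis append_take_drop_id min.absorb1 take_take)
  then have "psums m xs j = (((\<Sum>x\<leftarrow>take i xs. fst x) + (\<Sum>x\<leftarrow>drop i (take j xs). fst x)) mod m,
      (\<Sum>x\<leftarrow>take i xs. snd x) + (\<Sum>x\<leftarrow>drop i (take j xs). snd x))"
    unfolding psums_def zsum_def by (metis sum_list_append map_append)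
  moreover have "(u::nat) mod m = (u + v) mod m \<longleftrightarrow> v mod m = 0" for u v
    by (metis le_add1 mod_eq_dvd_iff_nat dvd_eq_mod_eq_0 add_diff_cancel_left')
  ultimately show ?thesis
    by (simp add: psums_def zsum_def)
qed

lemma is_sequencing_iff_nonzero_sum_blocks:
  assumes "distinct xs"
  shows "is_sequencing m xs \<longleftrightarrow>
    (\<forall>i j. i < j \<longrightarrow> j \<le> length xs \<longrightarrow> nonzero_sum m (set (drop i (take j xs))))"
proof -
  have "set [0..<length xs + 1] = {..length xs}"
    by auto
  then have "is_sequencing m xs \<longleftrightarrow> inj_on (psums m xs) {..length xs}"
    unfolding is_sequencing_def distinct_map by simp
  also have "\<dots> \<longleftrightarrow> (\<forall>i j. i < j \<longrightarrow> j \<le> length xs \<longrightarrow> psums m xs i \<noteq> psums m xs j)"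
  proof
    show "inj_on (psums m xs) {..length xs}"
      if "\<forall>i j. i < j \<longrightarrow> j \<le> length xs \<longrightarrow> psums m xs i \<noteq> psums m xs j"
      using that by (intro linorder_inj_onI) auto
  next
    assume inj: "inj_on (psums m xs) {..length xs}"
    show "\<forall>i j. i < j \<longrightarrow> j \<le> length xs \<longrightarrow> psums m xs i \<noteq> psums m xs j"
    proof (intro allI impI)
      fix i j :: nat
      assume "i < j" "j \<le> length xs"
      then show "psums m xs i \<noteq> psums m xs j"
        by (intro inj_on_contraD[OF inj]) auto
    qed
  qed
  also have "\<dots> \<longleftrightarrow> (\<forall>i j. i < j \<longrightarrow> j \<le> length xs \<longrightarrow> nonzero_sum m (set (drop i (take j xs))))"
    using assms by (simp add: psums_eq_iff nonzero_sum_set_iff)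
  finally show ?thesis .
qed

lemma not_nonzero_sum_if_rotational:
  "distinct xs \<Longrightarrow> is_rotational_sequencing m xs \<Longrightarrow> \<not> nonzero_sum m (set xs)"
  by (simp add: is_rotational_sequencing_def psums_def nonzero_sum_set_iff)

lemma sequenceable_if_nonzero_sums_correspond:
  assumes "inj_on g S"
    and nonzero_sums: "\<And>T. T \<subseteq> S \<Longrightarrow> nonzero_sum p (g ` T) \<longleftrightarrow> nonzero_sum m T"
    and "nonzero_sum m S" and "sequenceable p (g ` S)"
  shows "sequenceable m S"
proof -
  obtain ys where ys: "distinct ys" "set ys = g ` S"
    and "is_sequencing p ys \<or> is_rotational_sequencing p ys"
    using \<open>sequenceable p (g ` S)\<close> unfolding sequenceable_def by blast
  moreover have "nonzero_sum p (set ys)"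
    using nonzero_sums[of S] \<open>nonzero_sum m S\<close> ys(2) by simp
  ultimately have "is_sequencing p ys"
    using not_nonzero_sum_if_rotational by blast
  define xs where "xs = map (inv_into S g) ys"
  have ys_xs: "ys = map g xs"
    unfolding xs_def map_map using ys(2) by (intro map_idI[symmetric]) (auto simp: f_inv_into_f)
  have "set xs = S"
    unfolding xs_def using ys(2) \<open>inj_on g S\<close> by (simp add: image_image inv_into_f_f cong: image_cong)
  have "distinct xs"
    using ys(1) ys_xs by (simp add: distinct_map)
  have "nonzero_sum m (set (drop i (take j xs)))" if "i < j" "j \<le> length xs" for i j
  proof -
    have "nonzero_sum p (set (drop i (take j ys)))"
      using \<open>is_sequencing p ys\<close> that ys_xs
      unfolding is_sequencing_iff_nonzero_sum_blocks[OF ys(1)] by simp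
    moreover have "set (drop i (take j ys)) = g ` set (drop i (take j xs))"
      by (simp add: ys_xs drop_map take_map)
    moreover have "set (drop i (take j xs)) \<subseteq> S"
      using \<open>set xs = S\<close> by (meson order.trans set_drop_subset set_take_subset)
    ultimately show ?thesis
      using nonzero_sums by simp
  qed
  then have "is_sequencing m xs"
    using \<open>distinct xs\<close> by (simp add: is_sequencing_iff_nonzero_sum_blocks)
  then show ?thesis
    unfolding sequenceable_def using \<open>distinct xs\<close> \<open>set xs = S\<close> by blast
qed

section \<open>Lifting to the integers and reducing modulo a prime\<close>

lemma card_eq_sum_type:
  assumes "bij_betw e {0..<t} UNIV" and "finite S" and "has_type e t lam S"
  shows "card S = (\<Sum>i<t. lam i)"
proof -
  have "S = (\<Union>i<t. {x \<in> S. snd x = e i})"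
    using bij_betw_imp_surj_on[OF assms(1)] by (auto simp: atLeast0LessThan)
  moreover have "card (\<Union>i<t. {x \<in> S. snd x = e i}) = (\<Sum>i<t. card {x \<in> S. snd x = e i})"
    using bij_betw_imp_inj_on[OF assms(1)] \<open>finite S\<close>
    by (intro card_UN_disjoint) (auto simp: inj_on_def atLeast0LessThan)
  ultimately show ?thesis
    using \<open>has_type e t lam S\<close> by (simp add: has_type_def)
qed

lemma exists_congruent_lift:
  fixes S :: "(nat \<times> 'h::ab_group_add) set" and m :: nat
  assumes "finite S" and large: "\<And>q. prime q \<Longrightarrow> q dvd m \<Longrightarrow> fact (card S) < 2 * q"
  obtains D and x :: "nat \<times> 'h \<Rightarrow> int" where "coprime D (int m)"
    "\<And>s. s \<in> S \<Longrightarrow> int m dvd x s - D * int (fst s)"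
    "\<And>T. T \<subseteq> S \<Longrightarrow> \<not> nonzero_sum m T \<Longrightarrow> (\<Sum>s\<in>T. x s) = 0"
proof -
  define W :: "(nat \<times> 'h \<Rightarrow> int) set"
    where "W = {(\<lambda>s. of_bool (s \<in> T)) | T. T \<subseteq> S \<and> \<not> nonzero_sum m T}"
  have indicator_sum: "(\<Sum>s\<in>S. of_bool (s \<in> T) * f s) = (\<Sum>s\<in>T. f s)"
    if "T \<subseteq> S" for T and f :: "nat \<times> 'h \<Rightarrow> int"
    using \<open>finite S\<close> that by (simp add: Int_absorb1)
  obtain x D where "coprime D (int m)" and kernel: "\<And>w. w \<in> W \<Longrightarrow> (\<Sum>s\<in>S. w s * x s) = 0"
    and "\<And>s. s \<in> S \<Longrightarrow> int m dvd x s - D * int (fst s)"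
  proof (rule exists_kernel_vector_congruent_multiple[where W = W and a = "\<lambda>s. int (fst s)" and m = "int m", OF \<open>finite S\<close>])
    show "int m dvd (\<Sum>s\<in>S. w s * int (fst s))" if "w \<in> W" for w
      using that by (auto simp: W_def indicator_sum nonzero_sum_def simp flip: of_nat_sum)
    show "coprime (det (minor_mat ws cs)) (int m)"
      if "set ws \<subseteq> W" "distinct cs" "set cs \<subseteq> S" "length ws = length cs"
        and "det (minor_mat ws cs) \<noteq> 0" for ws cs
    proof (rule coprime_det_if_prime_factors_large[OF minor_mat_carrier[of ws cs, unfolded that(4)]])
      show "0 \<le> minor_mat ws cs $$ (i, j) \<and> minor_mat ws cs $$ (i, j) \<le> 1"
        if "i < length cs" "j < length cs" for i j
      proof -
        have "ws ! i \<in> W"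
          using \<open>set ws \<subseteq> W\<close> \<open>length ws = length cs\<close> that nth_mem[of i ws] by auto
        then show ?thesis
          using that \<open>length ws = length cs\<close> by (auto simp: W_def)
      qed
      have "fact (length cs) \<le> (fact (card S) :: nat)"
        using \<open>finite S\<close> that(2,3) by (metis card_mono distinct_card fact_mono)
      then show "fact (length cs) < 2 * q" if "prime q" "q dvd m" for q
        using large[OF that] by linarith
    qed fact
  qed blast
  moreover have "(\<Sum>s\<in>T. x s) = 0" if "T \<subseteq> S" "\<not> nonzero_sum m T" for T
    using kernel[of "\<lambda>s. of_bool (s \<in> T)"] that by (auto simp: W_def indicator_sum)
  ultimately show thesis
    using that by blast
qed

lemma inj_on_congruent_lift:
  fixes x :: "nat \<times> 'h \<Rightarrow> int"
  assumes "coprime D (int m)" and congruent: "\<And>s. s \<in> S \<Longrightarrow> int m dvd x s - D * int (fst s)"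
    and below: "\<And>s. s \<in> S \<Longrightarrow> fst s < m"
  shows "inj_on (\<lambda>s. (x s, snd s)) S"
proof (rule inj_onI)
  fix s s'
  assume "s \<in> S" "s' \<in> S" and eq: "(x s, snd s) = (x s', snd s')"
  then have "int m dvd D * (int (fst s) - int (fst s'))"
    using dvd_diff[OF congruent[OF \<open>s' \<in> S\<close>] congruent[OF \<open>s \<in> S\<close>]] by (simp add: algebra_simps)
  then have "int m dvd int (fst s) - int (fst s')"
    using \<open>coprime D (int m)\<close> by (simp add: coprime_commute coprime_dvd_mult_right_iff)
  then have "int (fst s) mod int m = int (fst s') mod int m"
    by (simp add: mod_eq_dvd_iff)
  then have "fst s = fst s'"
    using below[OF \<open>s \<in> S\<close>] below[OF \<open>s' \<in> S\<close>] by simp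
  then show "s = s'"
    using eq by (simp add: prod_eq_iff)
qed

lemma exists_nonzero_sum_preserving_lift:
  fixes S :: "(nat \<times> 'h::ab_group_add) set" and m :: nat
  assumes "finite S" and below: "\<And>s. s \<in> S \<Longrightarrow> fst s < m"
    and "\<And>q. prime q \<Longrightarrow> q dvd m \<Longrightarrow> fact (card S) < 2 * q"
  obtains x :: "nat \<times> 'h \<Rightarrow> int" where "inj_on (\<lambda>s. (x s, snd s)) S"
    and "\<And>T. T \<subseteq> S \<Longrightarrow> nonzero_sum m T \<longleftrightarrow> (\<Sum>s\<in>T. x s, \<Sum>s\<in>T. snd s) \<noteq> (0, 0)"
proof -
  obtain D x where "coprime D (int m)" and congruent: "\<And>s. s \<in> S \<Longrightarrow> int m dvd x s - D * int (fst s)"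
    and zero_sums: "\<And>T. T \<subseteq> S \<Longrightarrow> \<not> nonzero_sum m T \<Longrightarrow> (\<Sum>s\<in>T. x s) = 0"
    using exists_congruent_lift[OF assms(1,3)] by metis
  have "inj_on (\<lambda>s. (x s, snd s)) S"
    using \<open>coprime D (int m)\<close> congruent below by (rule inj_on_congruent_lift)
  moreover have "nonzero_sum m T \<longleftrightarrow> (\<Sum>s\<in>T. x s, \<Sum>s\<in>T. snd s) \<noteq> (0, 0)" if "T \<subseteq> S" for T
  proof
    assume "nonzero_sum m T"
    show "(\<Sum>s\<in>T. x s, \<Sum>s\<in>T. snd s) \<noteq> (0, 0)"
    proof
      assume zero: "(\<Sum>s\<in>T. x s, \<Sum>s\<in>T. snd s) = (0, 0)"
      have "int m dvd (\<Sum>s\<in>T. x s - D * int (fst s))"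
        using congruent that by (intro dvd_sum) auto
      then have "int m dvd D * int (\<Sum>s\<in>T. fst s)"
        using zero by (simp add: sum_subtractf sum_distrib_left)
      then have "int m dvd int (\<Sum>s\<in>T. fst s)"
        using \<open>coprime D (int m)\<close> by (simp add: coprime_commute coprime_dvd_mult_right_iff)
      then have "m dvd (\<Sum>s\<in>T. fst s)"
        by (simp only: int_dvd_int_iff)
      then show False
        using \<open>nonzero_sum m T\<close> zero by (simp add: nonzero_sum_def)
    qed
  qed (use zero_sums that in \<open>auto simp: nonzero_sum_def\<close>)
  ultimately show thesis
    using that by blast
qed

definition reduce_mod :: "nat \<Rightarrow> (nat \<times> 'h \<Rightarrow> int) \<Rightarrow> nat \<times> 'h \<Rightarrow> nat \<times> 'h" where
  "reduce_mod p x s = (nat (x s mod int p), snd s)"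

lemma eq_0_if_dvd_abs_less: "int p dvd d \<Longrightarrow> \<bar>d\<bar> < int p \<Longrightarrow> d = 0"
  by (meson dvd_abs_iff zdvd_not_zless zero_less_abs_iff)

lemma inj_on_reduce_mod:
  assumes "finite S" and bound: "2 * (\<Sum>s\<in>S. \<bar>x s\<bar>) < int p" and inj: "inj_on (\<lambda>s. (x s, snd s)) S"
  shows "inj_on (reduce_mod p x) S"
proof (rule inj_onI)
  fix s s'
  assume "s \<in> S" "s' \<in> S" and eq: "reduce_mod p x s = reduce_mod p x s'"
  have "\<bar>x s\<bar> \<le> (\<Sum>s\<in>S. \<bar>x s\<bar>)" "\<bar>x s'\<bar> \<le> (\<Sum>s\<in>S. \<bar>x s\<bar>)"
    using \<open>finite S\<close> \<open>s \<in> S\<close> \<open>s' \<in> S\<close> by (auto intro: member_le_sum)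
  then have "\<bar>x s - x s'\<bar> < int p"
    using bound by linarith
  moreover have "x s mod int p = x s' mod int p"
    using eq \<open>\<bar>x s - x s'\<bar> < int p\<close> by (simp add: reduce_mod_def eq_nat_nat_iff)
  ultimately have "x s = x s'"
    using eq_0_if_dvd_abs_less[of p "x s - x s'"] by (simp add: mod_eq_dvd_iff)
  then show "s = s'"
    using eq inj \<open>s \<in> S\<close> \<open>s' \<in> S\<close> by (auto simp: reduce_mod_def inj_on_def)
qed

lemma nonzero_sum_reduce_mod_iff:
  assumes "finite S" and bound: "2 * (\<Sum>s\<in>S. \<bar>x s\<bar>) < int p"
    and inj: "inj_on (reduce_mod p x) S" and "T \<subseteq> S"
  shows "nonzero_sum p (reduce_mod p x ` T) \<longleftrightarrow> (\<Sum>s\<in>T. x s, \<Sum>s\<in>T. snd s) \<noteq> (0, 0)"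
proof -
  have "inj_on (reduce_mod p x) T"
    using inj \<open>T \<subseteq> S\<close> by (rule inj_on_subset)
  then have sums: "(\<Sum>y\<in>reduce_mod p x ` T. f y) = (\<Sum>s\<in>T. f (reduce_mod p x s))" for f :: "_ \<Rightarrow> 'b::comm_monoid_add"
    by (rule sum.reindex_cong) auto
  have "0 \<le> (\<Sum>s\<in>S. \<bar>x s\<bar>)"
    by (simp add: sum_nonneg)
  then have "0 < p"
    using bound by linarith
  have "int ((\<Sum>y\<in>reduce_mod p x ` T. fst y) mod p) = int ((\<Sum>s\<in>T. nat (x s mod int p)) mod p)"
    using sums[of fst] by (simp add: reduce_mod_def)
  also have "\<dots> = (\<Sum>s\<in>T. x s mod int p) mod int p"
    using \<open>0 < p\<close> by (simp add: of_nat_sum of_nat_mod)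
  also have "\<dots> = (\<Sum>s\<in>T. x s) mod int p"
    by (rule mod_sum_eq)
  finally have fst_sum: "(\<Sum>y\<in>reduce_mod p x ` T. fst y) mod p = 0 \<longleftrightarrow> int p dvd (\<Sum>s\<in>T. x s)"
    by (metis dvd_eq_mod_eq_0 of_nat_eq_0_iff)
  have "\<bar>\<Sum>s\<in>T. x s\<bar> \<le> (\<Sum>s\<in>T. \<bar>x s\<bar>)"
    by (rule sum_abs)
  also have "\<dots> \<le> (\<Sum>s\<in>S. \<bar>x s\<bar>)"
    using \<open>finite S\<close> \<open>T \<subseteq> S\<close> by (intro sum_mono2) auto
  finally have "\<bar>\<Sum>s\<in>T. x s\<bar> < int p"
    using bound \<open>0 \<le> (\<Sum>s\<in>S. \<bar>x s\<bar>)\<close> by linarith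
  then have "int p dvd (\<Sum>s\<in>T. x s) \<longleftrightarrow> (\<Sum>s\<in>T. x s) = 0"
    using eq_0_if_dvd_abs_less[of p "\<Sum>s\<in>T. x s"] by auto
  moreover have "(\<Sum>y\<in>reduce_mod p x ` T. snd y) = (\<Sum>s\<in>T. snd s)"
    using sums[of snd] by (simp add: reduce_mod_def)
  ultimately show ?thesis
    using fst_sum by (simp add: nonzero_sum_def)
qed

lemma image_subset_nonzero_elems:
  assumes "S \<subseteq> nonzero_elems m" and "g ` S \<subseteq> {0..<p} \<times> UNIV"
    and "\<And>T. T \<subseteq> S \<Longrightarrow> nonzero_sum p (g ` T) \<longleftrightarrow> nonzero_sum m T"
  shows "g ` S \<subseteq> nonzero_elems p"
proof
  fix y
  assume "y \<in> g ` S"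
  then obtain s where "s \<in> S" "y = g s"
    by blast
  then have "nonzero_sum p {y} \<longleftrightarrow> nonzero_sum m {s}"
    using assms(3)[of "{s}"] by simp
  then show "y \<in> nonzero_elems p"
    using assms(1,2) \<open>s \<in> S\<close> \<open>y = g s\<close> by (auto simp: nonzero_elems_def nonzero_sum_singleton)
qed

lemma has_type_image:
  assumes "inj_on g S" and "\<And>s. s \<in> S \<Longrightarrow> snd (g s) = snd s"
  shows "has_type e t lam (g ` S) \<longleftrightarrow> has_type e t lam S"
proof -
  have "{y \<in> g ` S. snd y = h} = g ` {s \<in> S. snd s = h}" for h
    using assms(2) by auto
  moreover have "inj_on g {s \<in> S. snd s = h}" for h
    using assms(1) by (rule inj_on_subset) auto
  ultimately show ?thesis
    by (simp add: has_type_def card_image)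
qed

lemma sequenceable_by_reduce_mod:
  fixes S :: "(nat \<times> 'h::ab_group_add) set"
  assumes "finite S" and S: "S \<subseteq> nonzero_elems m" "nonzero_sum m S" "has_type e t lam S"
    and inj: "inj_on (\<lambda>s. (x s, snd s)) S"
    and lift: "\<And>T. T \<subseteq> S \<Longrightarrow> nonzero_sum m T \<longleftrightarrow> (\<Sum>s\<in>T. x s, \<Sum>s\<in>T. snd s) \<noteq> (0, 0)"
    and bound: "2 * (\<Sum>s\<in>S. \<bar>x s\<bar>) < int p"
    and sequenceable_p: "\<And>S'. S' \<subseteq> nonzero_elems p \<Longrightarrow> nonzero_sum p S' \<Longrightarrow> has_type e t lam S'
      \<Longrightarrow> sequenceable p S'"
  shows "sequenceable m S"
proof -
  let ?g = "reduce_mod p x"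
  have "inj_on ?g S"
    by (rule inj_on_reduce_mod[OF \<open>finite S\<close> bound inj])
  then have nonzero_sums: "\<And>T. T \<subseteq> S \<Longrightarrow> nonzero_sum p (?g ` T) \<longleftrightarrow> nonzero_sum m T"
    using nonzero_sum_reduce_mod_iff[OF \<open>finite S\<close> bound] lift by blast
  have "0 \<le> (\<Sum>s\<in>S. \<bar>x s\<bar>)"
    by (simp add: sum_nonneg)
  then have "0 < p"
    using bound by linarith
  then have "?g ` S \<subseteq> nonzero_elems p"
    using S(1) nonzero_sums by (intro image_subset_nonzero_elems) (auto simp: reduce_mod_def nat_less_iff)
  moreover have "has_type e t lam (?g ` S)"
    using has_type_image[OF \<open>inj_on ?g S\<close>] S(3) by (simp add: reduce_mod_def)
  ultimately have "sequenceable p (?g ` S)"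
    using sequenceable_p nonzero_sums[of S] S(2) by blast
  then show ?thesis
    using sequenceable_if_nonzero_sums_correspond[OF \<open>inj_on ?g S\<close> nonzero_sums S(2)] by blast
qed

theorem theorem4p12:
  fixes e :: "nat \<Rightarrow> 'h::{ab_group_add, finite}"
    and lam :: "nat \<Rightarrow> nat" and t k m :: nat
  assumes "bij_betw e {0..<t} (UNIV :: 'h set)"
    and "e 0 = 0"
    and "k = (\<Sum>i<t. lam i)"
    and "infinite {p::nat. prime p \<and>
           (\<forall>S. S \<subseteq> nonzero_elems p \<and> nonzero_sum p S \<and> has_type e t lam S
                \<longrightarrow> sequenceable p S)}"
    and "m > 0"
    and "\<forall>q::nat. prime q \<and> q dvd m \<longrightarrow> 2 * q > fact k"
  shows "\<forall>S. S \<subseteq> nonzero_elems m \<and> nonzero_sum m S \<and> has_type e t lam S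
           \<longrightarrow> sequenceable m S"
proof (intro allI impI)
  fix S :: "(nat \<times> 'h) set"
  assume "S \<subseteq> nonzero_elems m \<and> nonzero_sum m S \<and> has_type e t lam S"
  then have S: "S \<subseteq> nonzero_elems m" "nonzero_sum m S" "has_type e t lam S"
    by auto
  have "finite S"
    using S(1) by (rule finite_subset) (simp add: nonzero_elems_def)
  have "card S = k"
    using card_eq_sum_type[OF assms(1) \<open>finite S\<close> S(3)] assms(3) by simp
  then have large: "\<And>q. prime q \<Longrightarrow> q dvd m \<Longrightarrow> fact (card S) < 2 * q"
    using assms(6) by auto
  have below: "\<And>s. s \<in> S \<Longrightarrow> fst s < m"
    using S(1) by (auto simp: nonzero_elems_def)
  obtain x :: "nat \<times> 'h \<Rightarrow> int" where inj: "inj_on (\<lambda>s. (x s, snd s)) S"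
    and lift: "\<And>T. T \<subseteq> S \<Longrightarrow> nonzero_sum m T \<longleftrightarrow> (\<Sum>s\<in>T. x s, \<Sum>s\<in>T. snd s) \<noteq> (0, 0)"
    using exists_nonzero_sum_preserving_lift[OF \<open>finite S\<close> below large] by blast
  obtain p where p: "prime p \<and> (\<forall>S'. S' \<subseteq> nonzero_elems p \<and> nonzero_sum p S' \<and> has_type e t lam S'
      \<longrightarrow> sequenceable p S')" and "nat (2 * (\<Sum>s\<in>S. \<bar>x s\<bar>)) < p"
    using assms(4) unfolding infinite_nat_iff_unbounded by blast
  then have bound: "2 * (\<Sum>s\<in>S. \<bar>x s\<bar>) < int p"
    by linarith
  have sequenceable_p: "\<And>S'. S' \<subseteq> nonzero_elems p \<Longrightarrow> nonzero_sum p S' \<Longrightarrow> has_type e t lam S'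
      \<Longrightarrow> sequenceable p S'"
    using p by blast
  show "sequenceable m S"
    by (rule sequenceable_by_reduce_mod[where x = x and p = p])
      (fact \<open>finite S\<close> S inj lift bound sequenceable_p)+
qed

end
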